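(* Let $\mathbf{u}$ be an $m$-dimensional unit vector with entries in $\mathcal{R}_{12}$ such that $\mathrm{lde}(\mathbf{u})=0$. Then for any $0\le j\le m-1$ there exists a sequence $G_1,\ldots,G_q$ of one-level operators of type $\zeta_{12}$ and two-level operators of type $X$ and $H'$ such that $G_1\cdots G_q\mathbf{u}=\mathbf{e}_j$.
   Context: $\zeta_{12}=e^{2\pi i/12}$, $\mathcal{R}_{12}$ is the smallest subring of $\mathbb{C}$ containing $1/2$ and $\zeta_{12}$, and $\mathbb{Z}[\zeta_{12}]$ the smallest subring containing $\zeta_{12}$. Let $\delta=1+i$. For a vector $\mathbf{u}$ over $\mathcal{R}_{12}$, $\mathrm{lde}(\mathbf{u})$ is the smallest $\ell\in\mathbb{N}$ such that $\delta^\ell\mathbf{u}$ has all entries in $\mathbb{Z}[\zeta_{12}]$. $\mathbf{e}_j$ is the $j$-th standard basis vector. $X=\begin{bmatrix}0&1\\1&0\end{bmatrix}$, $H'=\frac{1+i}{2}\begin{bmatrix}1&1\\1&-1\end{bmatrix}$. The one-level operator $c_{[j]}$ of type $c$ is the $m\times m$ identity with $(j,j)$ entry replaced by $c$; the two-level operator $M_{[j,j']}$ ($j<j'$) of type $M\in\mathrm{M}_2(\mathbb{C})$ is the $m\times m$ identity with entries at $(j,j),(j,j'),(j',j),(j',j')$ replaced by $M_{1,1},M_{1,2},M_{2,1},M_{2,2}$. *)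

theory Defs
  imports Complex_Main "Jordan_Normal_Form.Matrix"
begin

definition zeta12 :: complex where
  "zeta12 = cis (2 * pi / 12)"

inductive_set Zzeta12 :: "complex set" where
  Z_one: "1 \<in> Zzeta12"
| Z_zeta: "zeta12 \<in> Zzeta12"
| Z_add: "a \<in> Zzeta12 \<Longrightarrow> b \<in> Zzeta12 \<Longrightarrow> a + b \<in> Zzeta12"
| Z_neg: "a \<in> Zzeta12 \<Longrightarrow> - a \<in> Zzeta12"
| Z_mult: "a \<in> Zzeta12 \<Longrightarrow> b \<in> Zzeta12 \<Longrightarrow> a * b \<in> Zzeta12"

inductive_set R12 :: "complex set" where
  R_one: "1 \<in> R12"
| R_half: "1/2 \<in> R12"
| R_zeta: "zeta12 \<in> R12"
| R_add: "a \<in> R12 \<Longrightarrow> b \<in> R12 \<Longrightarrow> a + b \<in> R12"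
| R_neg: "a \<in> R12 \<Longrightarrow> - a \<in> R12"
| R_mult: "a \<in> R12 \<Longrightarrow> b \<in> R12 \<Longrightarrow> a * b \<in> R12"

definition delta :: complex where
  "delta = 1 + \<i>"

definition lde :: "complex vec \<Rightarrow> nat" where
  "lde u = (LEAST l. \<forall>i < dim_vec u. delta ^ l * u $ i \<in> Zzeta12)"

definition unit_vector :: "complex vec \<Rightarrow> bool" where
  "unit_vector u \<longleftrightarrow> (\<Sum>i<dim_vec u. (cmod (u $ i))\<^sup>2) = 1"

definition Xgate :: "complex mat" where
  "Xgate = mat 2 2 (\<lambda>(a,b). if a \<noteq> b then 1 else 0)"

definition Hprime :: "complex mat" where
  "Hprime = mat 2 2 (\<lambda>(a,b). (1 + \<i>) / 2 * (if a = 1 \<and> b = 1 then -1 else 1))"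

definition one_level :: "nat \<Rightarrow> complex \<Rightarrow> nat \<Rightarrow> complex mat" where
  "one_level m c j = mat m m (\<lambda>(a,b). if a = b then (if a = j then c else 1) else 0)"

definition two_level :: "nat \<Rightarrow> complex mat \<Rightarrow> nat \<Rightarrow> nat \<Rightarrow> complex mat" where
  "two_level m M j j' = mat m m (\<lambda>(a,b).
     if a = j \<and> b = j then M $$ (0,0)
     else if a = j \<and> b = j' then M $$ (0,1)
     else if a = j' \<and> b = j then M $$ (1,0)
     else if a = j' \<and> b = j' then M $$ (1,1)
     else if a = b then 1 else 0)"

definition gens :: "nat \<Rightarrow> complex mat set" where
  "gens m = {one_level m zeta12 j | j. j < m}
          \<union> {two_level m Xgate j j' | j j'. j < j' \<and> j' < m}
          \<union> {two_level m Hprime j j' | j j'. j < j' \<and> j' < m}"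

end

theory Submission
  imports Defs "HOL-Computational_Algebra.Polynomial"
begin

(* Since zeta^4 = zeta^2 - 1, every element of Z[zeta] is a + b zeta + c zeta^2 + d zeta^3 with
   integers a, b, c, d, and its squared modulus is A + B sqrt 3 with
   A = (a^2 + ac + c^2) + (b^2 + bd + d^2) and B = ab + bc + cd.  For a unit vector with entries
   in Z[zeta] the irrationality of sqrt 3 forces the A's of the entries to sum to 1.  They are
   nonnegative integers vanishing only at zero entries, so the vector is x e_i for a single i,
   and A = 1 makes x a twelfth root of unity zeta^k.  Applying zeta_[i] another 11 k times turns
   it into e_i, and one X_[i,j] (or none, if i = j) moves it to e_j. *)

lemma zeta12_eq: "zeta12 = Complex (sqrt 3 / 2) (1 / 2)"
proof -
  have "2 * pi / 12 = pi / 6" by simp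
  then show ?thesis
    by (simp add: zeta12_def complex_eq_iff cos_30 sin_30)
qed

lemma zeta12_power: "zeta12 ^ n = cis (real n * pi / 6)"
  by (simp add: zeta12_def DeMoivre)

lemma zeta12_power_2: "zeta12 ^ 2 = Complex (1 / 2) (sqrt 3 / 2)"
  by (simp add: zeta12_power complex_eq_iff cos_60 sin_60)

lemma zeta12_power_3: "zeta12 ^ 3 = \<i>"
  by (simp add: zeta12_power)

lemma zeta12_power_4: "zeta12 ^ 4 = zeta12 ^ 2 - 1"
proof -
  have "zeta12 ^ 4 = zeta12 ^ 2 * zeta12 ^ 2"
    by (simp flip: power_add)
  also have "\<dots> = Complex (1 / 2) (sqrt 3 / 2) * Complex (1 / 2) (sqrt 3 / 2)"
    by (simp only: zeta12_power_2)
  also have "\<dots> = Complex (1 / 2) (sqrt 3 / 2) - 1"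
    by (simp add: complex_eq_iff)
  finally show ?thesis
    by (simp only: zeta12_power_2)
qed

lemma zeta12_power_12: "zeta12 ^ 12 = 1"
  by (simp add: zeta12_power)

definition zeta12_comb :: "int \<Rightarrow> int \<Rightarrow> int \<Rightarrow> int \<Rightarrow> complex" where
  "zeta12_comb a b c d =
     of_int a + of_int b * zeta12 + of_int c * zeta12 ^ 2 + of_int d * zeta12 ^ 3"

lemma mult_reduce_mod_Phi12:
  fixes z a b c d e f g h :: "'a::comm_ring_1"
  assumes "z ^ 4 = z ^ 2 - 1"
  shows "(a + b * z + c * z ^ 2 + d * z ^ 3) * (e + f * z + g * z ^ 2 + h * z ^ 3) =
    (a*e - (b*h + c*g + d*f) - d*h) + (a*f + b*e - (c*h + d*g)) * z
    + (a*g + b*f + c*e + (b*h + c*g + d*f)) * z ^ 2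
    + (a*h + b*g + c*f + d*e + (c*h + d*g)) * z ^ 3"
proof -
  have "(a + b * z + c * z ^ 2 + d * z ^ 3) * (e + f * z + g * z ^ 2 + h * z ^ 3) =
    (a*e - (b*h + c*g + d*f) - d*h) + (a*f + b*e - (c*h + d*g)) * z
    + (a*g + b*f + c*e + (b*h + c*g + d*f)) * z ^ 2
    + (a*h + b*g + c*f + d*e + (c*h + d*g)) * z ^ 3
    + (z ^ 4 - z ^ 2 + 1) * ((b*h + c*g + d*f) + (c*h + d*g) * z + d*h * (z ^ 2 + 1))"
    by (simp add: algebra_simps eval_nat_numeral)
  with assms show ?thesis
    by simp
qed

lemma zeta12_comb_mult:
  "zeta12_comb a b c d * zeta12_comb e f g h =
    zeta12_comb (a*e - (b*h + c*g + d*f) - d*h) (a*f + b*e - (c*h + d*g))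
      (a*g + b*f + c*e + (b*h + c*g + d*f)) (a*h + b*g + c*f + d*e + (c*h + d*g))"
  unfolding zeta12_comb_def by (subst mult_reduce_mod_Phi12[OF zeta12_power_4]) simp

lemma Zzeta12_imp_comb: "x \<in> Zzeta12 \<Longrightarrow> \<exists>a b c d. x = zeta12_comb a b c d"
proof (induction rule: Zzeta12.induct)
  case Z_one
  have "1 = zeta12_comb 1 0 0 0"
    by (simp add: zeta12_comb_def)
  then show ?case by blast
next
  case Z_zeta
  have "zeta12 = zeta12_comb 0 1 0 0"
    by (simp add: zeta12_comb_def)
  then show ?case by blast
next
  case (Z_add x y)
  then obtain a b c d e f g h where "x = zeta12_comb a b c d" "y = zeta12_comb e f g h"
    by blast
  then have "x + y = zeta12_comb (a + e) (b + f) (c + g) (d + h)"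
    by (simp add: zeta12_comb_def algebra_simps)
  then show ?case by blast
next
  case (Z_neg x)
  then obtain a b c d where "x = zeta12_comb a b c d"
    by blast
  then have "- x = zeta12_comb (- a) (- b) (- c) (- d)"
    by (simp add: zeta12_comb_def algebra_simps)
  then show ?case by blast
next
  case (Z_mult x y)
  then show ?case
    by (metis zeta12_comb_mult)
qed

lemma cmod_zeta12_comb_sq:
  "(cmod (zeta12_comb a b c d))\<^sup>2 =
    of_int ((a\<^sup>2 + a*c + c\<^sup>2) + (b\<^sup>2 + b*d + d\<^sup>2)) + of_int (a*b + b*c + c*d) * sqrt 3"
proof -
  have "zeta12_comb a b c d = Complex (a + b * sqrt 3 / 2 + c / 2) (b / 2 + c * sqrt 3 / 2 + d)"
    unfolding zeta12_comb_def zeta12_power_2 zeta12_power_3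
    by (simp add: zeta12_eq complex_eq_iff)
  then have "(cmod (zeta12_comb a b c d))\<^sup>2 =
      (a + b * sqrt 3 / 2 + c / 2)\<^sup>2 + (b / 2 + c * sqrt 3 / 2 + d)\<^sup>2"
    by (simp add: cmod_power2)
  also have "\<dots> = of_int ((a\<^sup>2 + a*c + c\<^sup>2) + (b\<^sup>2 + b*d + d\<^sup>2)) + of_int (a*b + b*c + c*d) * sqrt 3"
    by (simp add: power2_eq_square algebra_simps)
  finally show ?thesis .
qed

lemma four_quad_form: "4 * (a\<^sup>2 + a*c + c\<^sup>2) = (2*a + c)\<^sup>2 + 3 * (c\<^sup>2::int)"
  by (simp add: power2_eq_square algebra_simps)

lemma quad_form_nonneg: "0 \<le> (a\<^sup>2 + a*c + c\<^sup>2 :: int)"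
proof -
  have "0 \<le> 4 * (a\<^sup>2 + a*c + c\<^sup>2)"
    unfolding four_quad_form by simp
  then show ?thesis
    by simp
qed

lemma quad_form_eq_0_iff: "a\<^sup>2 + a*c + c\<^sup>2 = 0 \<longleftrightarrow> a = 0 \<and> (c::int) = 0"
proof
  assume "a\<^sup>2 + a*c + c\<^sup>2 = 0"
  then have "(2*a + c)\<^sup>2 + 3 * c\<^sup>2 = 0"
    using four_quad_form[of a c] by simp
  then have "(2*a + c)\<^sup>2 = 0" "c\<^sup>2 = 0"
    using zero_le_power2[of "2*a + c"] zero_le_power2[of c] by linarith+
  then show "a = 0 \<and> c = 0"
    by simp
qed simp

lemma quad_form_eq_1:
  assumes "a\<^sup>2 + a*c + c\<^sup>2 = (1::int)"
  shows "(a, c) \<in> {(1, 0), (-1, 0), (0, 1), (0, -1), (1, -1), (-1, 1)}"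
proof -
  have "(2*a + c)\<^sup>2 + 3 * c\<^sup>2 = 4"
    using assms four_quad_form[of a c] by simp
  then have "c\<^sup>2 \<le> 1" "(2*a + c)\<^sup>2 \<le> 4"
    using zero_le_power2[of "2*a + c"] zero_le_power2[of c] by linarith+
  then have "\<bar>c\<bar> \<le> 1" "\<bar>2*a + c\<bar> \<le> 2"
    using power2_le_iff_abs_le[of 2 "2*a + c"] by (simp_all add: abs_square_le_1)
  then have "a \<in> {-1, 0, 1}" "c \<in> {-1, 0, 1}"
    by auto
  with assms show ?thesis
    by auto
qed

lemma root_of_unity_of_quad_form_eq_1:
  fixes \<omega> :: "'a::comm_ring_1"
  assumes \<omega>: "\<omega>\<^sup>2 = \<omega> - 1" and ac: "a\<^sup>2 + a*c + c\<^sup>2 = 1"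
  shows "\<exists>k. of_int a + of_int c * \<omega> = \<omega> ^ k"
proof -
  have \<omega>3: "\<omega> ^ 3 = - 1"
  proof -
    have "\<omega> ^ 3 = \<omega> * \<omega>\<^sup>2"
      by (simp add: power3_eq_cube power2_eq_square)
    also have "\<dots> = \<omega> * (\<omega> - 1)"
      by (simp only: \<omega>)
    also have "\<dots> = \<omega>\<^sup>2 - \<omega>"
      by (simp add: algebra_simps power2_eq_square)
    finally show ?thesis
      by (simp add: \<omega>)
  qed
  have \<omega>4: "\<omega> ^ 4 = - \<omega>"
    using power_add[of \<omega> 1 3] by (simp add: \<omega>3)
  have \<omega>5: "\<omega> ^ 5 = 1 - \<omega>"
    using power_add[of \<omega> 2 3] by (simp add: \<omega>3 \<omega>)
  from quad_form_eq_1[OF ac] consider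
      "a = 1" "c = 0" | "a = -1" "c = 0" | "a = 0" "c = 1"
    | "a = 0" "c = -1" | "a = 1" "c = -1" | "a = -1" "c = 1"
    by auto
  then show ?thesis
  proof cases
    case 1 show ?thesis using 1 by (intro exI[of _ 0]) simp
  next
    case 2 show ?thesis using 2 \<omega>3 by (intro exI[of _ 3]) simp
  next
    case 3 show ?thesis using 3 by (intro exI[of _ 1]) simp
  next
    case 4 show ?thesis using 4 \<omega>4 by (intro exI[of _ 4]) simp
  next
    case 5 show ?thesis using 5 \<omega>5 by (intro exI[of _ 5]) simp
  next
    case 6 show ?thesis using 6 \<omega> by (intro exI[of _ 2]) simp
  qed
qed

lemma zeta12_comb_root_of_unity:
  assumes "(a\<^sup>2 + a*c + c\<^sup>2) + (b\<^sup>2 + b*d + d\<^sup>2) = 1"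
  shows "\<exists>k. zeta12_comb a b c d = zeta12 ^ k"
proof -
  have \<omega>: "(zeta12\<^sup>2)\<^sup>2 = zeta12\<^sup>2 - 1"
    using zeta12_power_4 by (simp flip: power_mult)
  from assms consider
      "a\<^sup>2 + a*c + c\<^sup>2 = 1" "b = 0" "d = 0"
    | "b\<^sup>2 + b*d + d\<^sup>2 = 1" "a = 0" "c = 0"
    using quad_form_nonneg[of a c] quad_form_nonneg[of b d] quad_form_eq_0_iff
    by (smt (verit))
  then show ?thesis
  proof cases
    case 1
    then obtain k where "of_int a + of_int c * zeta12\<^sup>2 = (zeta12\<^sup>2) ^ k"
      using root_of_unity_of_quad_form_eq_1[OF \<omega>] by blast
    then have "zeta12_comb a b c d = zeta12 ^ (2 * k)"
      using 1 by (simp add: zeta12_comb_def power_mult)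
    then show ?thesis ..
  next
    case 2
    then obtain k where "of_int b + of_int d * zeta12\<^sup>2 = (zeta12\<^sup>2) ^ k"
      using root_of_unity_of_quad_form_eq_1[OF \<omega>] by blast
    moreover have "zeta12_comb 0 b 0 d = zeta12 * (of_int b + of_int d * zeta12\<^sup>2)"
      by (simp add: zeta12_comb_def algebra_simps power2_eq_square power3_eq_cube)
    ultimately have "zeta12_comb a b c d = zeta12 * (zeta12\<^sup>2) ^ k"
      using 2 by simp
    then have "zeta12_comb a b c d = zeta12 ^ (2 * k + 1)"
      by (simp add: power_mult)
    then show ?thesis ..
  qed
qed

lemma sqrt3_notin_Rats: "sqrt 3 \<notin> \<rat>"
proof
  assume "sqrt 3 \<in> \<rat>"
  moreover have "algebraic_int (sqrt 3)"
    by (intro algebraic_int_sqrt) simp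
  ultimately have "sqrt 3 \<in> \<int>"
    by (intro rational_algebraic_int_is_int)
  then obtain n where n: "sqrt 3 = of_int n"
    by (elim Ints_cases)
  have "1 < sqrt 3" "sqrt 3 < 2"
    by (simp_all add: real_less_rsqrt real_less_lsqrt)
  with n show False
    by simp
qed

lemma of_int_add_of_int_mult_sqrt3_eq_0:
  assumes "of_int p + of_int q * sqrt 3 = (0::real)"
  shows "q = 0"
proof (rule ccontr)
  assume "q \<noteq> 0"
  with assms have "sqrt 3 = - of_int p / of_int q"
    by (simp add: field_simps)
  also have "\<dots> \<in> \<rat>"
    by simp
  finally show False
    using sqrt3_notin_Rats by contradiction
qed

lemma Zzeta12_cmod_sq:
  assumes "x \<in> Zzeta12"
  shows "\<exists>A B :: int. (cmod x)\<^sup>2 = of_int A + of_int B * sqrt 3 \<and> 0 \<le> A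
           \<and> (A = 0 \<longrightarrow> x = 0) \<and> (A = 1 \<longrightarrow> (\<exists>k. x = zeta12 ^ k))"
proof -
  obtain a b c d where x: "x = zeta12_comb a b c d"
    using Zzeta12_imp_comb[OF assms] by blast
  define A where "A = (a\<^sup>2 + a*c + c\<^sup>2) + (b\<^sup>2 + b*d + d\<^sup>2)"
  have "0 \<le> A"
    unfolding A_def using quad_form_nonneg[of a c] quad_form_nonneg[of b d] by linarith
  moreover have "x = 0" if "A = 0"
  proof -
    have "a\<^sup>2 + a*c + c\<^sup>2 = 0" "b\<^sup>2 + b*d + d\<^sup>2 = 0"
      using that quad_form_nonneg[of a c] quad_form_nonneg[of b d] unfolding A_def by linarith+
    then show ?thesis
      unfolding x quad_form_eq_0_iff by (simp add: zeta12_comb_def)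
  qed
  moreover have "\<exists>k. x = zeta12 ^ k" if "A = 1"
    using zeta12_comb_root_of_unity that unfolding x A_def by blast
  ultimately show ?thesis
    using cmod_zeta12_comb_sq unfolding x A_def by blast
qed

lemma nonneg_int_sum_eq_1E:
  fixes f :: "'a \<Rightarrow> int"
  assumes "finite I" "\<And>i. i \<in> I \<Longrightarrow> 0 \<le> f i" "sum f I = 1"
  obtains i where "i \<in> I" "f i = 1" "\<And>j. j \<in> I \<Longrightarrow> j \<noteq> i \<Longrightarrow> f j = 0"
proof -
  have "\<exists>i\<in>I. f i \<noteq> 0"
    using assms(3) by (metis sum.neutral zero_neq_one)
  then obtain i where i: "i \<in> I" "f i \<noteq> 0" ..
  have "f i \<le> sum f I"
    using i(1) assms(1,2) by (intro member_le_sum) auto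
  then have "f i \<le> 1"
    using assms(3) by simp
  with i assms(2) have "f i = 1"
    by fastforce
  moreover have "f j = 0" if "j \<in> I" "j \<noteq> i" for j
  proof -
    have "f i + f j \<le> sum f I"
      using that i assms(1,2) sum_mono2[of I "{i, j}" f] by auto
    with \<open>f i = 1\<close> assms(2,3) that show ?thesis
      by fastforce
  qed
  ultimately show ?thesis
    using that i by blast
qed

lemma Zzeta12_unit_vector_eq_root_of_unity_unit_vec:
  assumes Z: "\<forall>i < dim_vec u. u $ i \<in> Zzeta12" and "unit_vector u"
  obtains i k where "i < dim_vec u" "u = zeta12 ^ k \<cdot>\<^sub>v unit_vec (dim_vec u) i"
proof -
  let ?m = "dim_vec u"
  have "\<forall>i < ?m. \<exists>A B :: int. (cmod (u $ i))\<^sup>2 = of_int A + of_int B * sqrt 3 \<and> 0 \<le> A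
      \<and> (A = 0 \<longrightarrow> u $ i = 0) \<and> (A = 1 \<longrightarrow> (\<exists>k. u $ i = zeta12 ^ k))"
    using Zzeta12_cmod_sq Z by blast
  then obtain A B :: "nat \<Rightarrow> int" where AB: "\<And>i. i < ?m \<Longrightarrow>
      (cmod (u $ i))\<^sup>2 = of_int (A i) + of_int (B i) * sqrt 3 \<and> 0 \<le> A i
      \<and> (A i = 0 \<longrightarrow> u $ i = 0) \<and> (A i = 1 \<longrightarrow> (\<exists>k. u $ i = zeta12 ^ k))"
    unfolding choice_iff' by blast
  have "1 = (\<Sum>i<?m. (cmod (u $ i))\<^sup>2)"
    using \<open>unit_vector u\<close> by (simp add: unit_vector_def)
  also have "\<dots> = of_int (sum A {..<?m}) + of_int (sum B {..<?m}) * sqrt 3"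
    using AB by (simp add: sum.distrib sum_distrib_right)
  finally have norm_eq: "of_int (sum A {..<?m} - 1) + of_int (sum B {..<?m}) * sqrt 3 = (0::real)"
    by simp
  then have "sum B {..<?m} = 0"
    by (rule of_int_add_of_int_mult_sqrt3_eq_0)
  with norm_eq have "real_of_int (sum A {..<?m} - 1) = 0"
    by (simp only: of_int_0 mult_zero_left add_0_right)
  then have "sum A {..<?m} = 1"
    by (simp only: of_int_eq_0_iff)
  then obtain i where i: "i < ?m" "A i = 1" and others: "\<And>j. j < ?m \<Longrightarrow> j \<noteq> i \<Longrightarrow> A j = 0"
    using nonneg_int_sum_eq_1E[of "{..<?m}" A] AB by auto
  obtain k where "u $ i = zeta12 ^ k"
    using AB i by blast
  then have "u = zeta12 ^ k \<cdot>\<^sub>v unit_vec ?m i"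
    using AB others i(1) by (intro eq_vecI) auto
  with i show ?thesis
    using that by blast
qed

lemma imaginary_unit_in_Zzeta12: "\<i> \<in> Zzeta12"
proof -
  have "zeta12 * zeta12 * zeta12 \<in> Zzeta12"
    by (intro Z_mult Z_zeta)
  then show ?thesis
    by (simp flip: zeta12_power_3 add: power3_eq_cube)
qed

lemma delta_power_in_Zzeta12: "delta ^ n \<in> Zzeta12"
proof (induction n)
  case 0
  show ?case by (simp add: Z_one)
next
  case (Suc n)
  have "delta \<in> Zzeta12"
    unfolding delta_def by (intro Z_add Z_one imaginary_unit_in_Zzeta12)
  with Suc show ?case
    by (simp add: Z_mult)
qed

lemma delta_power_mult_in_Zzeta12_mono:
  assumes "delta ^ l * x \<in> Zzeta12" and "l \<le> l'"
  shows "delta ^ l' * x \<in> Zzeta12"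
proof -
  have "delta ^ l' * x = delta ^ (l' - l) * (delta ^ l * x)"
    using \<open>l \<le> l'\<close> by (simp flip: mult.assoc power_add)
  then show ?thesis
    using assms(1) delta_power_in_Zzeta12 Z_mult by metis
qed

lemma R12_imp_delta_power_mult_in_Zzeta12:
  "x \<in> R12 \<Longrightarrow> \<exists>l. delta ^ l * x \<in> Zzeta12"
proof (induction rule: R12.induct)
  case R_one
  show ?case
    using Z_one by (intro exI[of _ 0]) simp
next
  case R_half
  have "delta ^ 2 * (1 / 2) = \<i>"
    by (simp add: delta_def power2_eq_square algebra_simps)
  then show ?case
    using imaginary_unit_in_Zzeta12 by metis
next
  case R_zeta
  show ?case
    using Z_zeta by (intro exI[of _ 0]) simp
next
  case (R_add x y)
  then obtain l l' where "delta ^ l * x \<in> Zzeta12" "delta ^ l' * y \<in> Zzeta12"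
    by blast
  then have "delta ^ (l + l') * x \<in> Zzeta12" "delta ^ (l + l') * y \<in> Zzeta12"
    by (auto elim: delta_power_mult_in_Zzeta12_mono)
  then show ?case
    by (metis Z_add distrib_left)
next
  case (R_neg x)
  then show ?case
    by (metis Z_neg mult_minus_right)
next
  case (R_mult x y)
  then obtain l l' where "delta ^ l * x \<in> Zzeta12" "delta ^ l' * y \<in> Zzeta12"
    by blast
  then have "(delta ^ l * x) * (delta ^ l' * y) \<in> Zzeta12"
    by (rule Z_mult)
  then have "delta ^ (l + l') * (x * y) \<in> Zzeta12"
    by (simp add: power_add algebra_simps)
  then show ?case ..
qed

lemma lde_eq_0_imp_Zzeta12:
  assumes R: "\<forall>i < dim_vec u. u $ i \<in> R12" and "lde u = 0"
  shows "\<forall>i < dim_vec u. u $ i \<in> Zzeta12"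
proof -
  have "\<forall>i < dim_vec u. \<exists>l. delta ^ l * u $ i \<in> Zzeta12"
    using R R12_imp_delta_power_mult_in_Zzeta12 by blast
  then obtain l where l: "\<And>i. i < dim_vec u \<Longrightarrow> delta ^ l i * u $ i \<in> Zzeta12"
    unfolding choice_iff' by blast
  have "\<forall>i < dim_vec u. delta ^ (\<Sum>k<dim_vec u. l k) * u $ i \<in> Zzeta12"
    using l by (auto intro: delta_power_mult_in_Zzeta12_mono member_le_sum)
  then have "\<forall>i < dim_vec u. delta ^ lde u * u $ i \<in> Zzeta12"
    unfolding lde_def by (rule LeastI)
  with \<open>lde u = 0\<close> show ?thesis
    by simp
qed

definition gate_reachable :: "nat \<Rightarrow> complex vec \<Rightarrow> complex vec \<Rightarrow> bool" where
  "gate_reachable m u v \<longleftrightarrow> (\<exists>Gs. set Gs \<subseteq> gens m \<and> foldr (*) Gs (1\<^sub>m m) *\<^sub>v u = v)"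

lemma gens_carrier_mat: "G \<in> gens m \<Longrightarrow> G \<in> carrier_mat m m"
  unfolding gens_def one_level_def two_level_def by auto

lemma foldr_gens_carrier_mat: "set Gs \<subseteq> gens m \<Longrightarrow> foldr (*) Gs (1\<^sub>m m) \<in> carrier_mat m m"
  by (induction Gs) (auto intro: mult_carrier_mat gens_carrier_mat)

lemma gate_reachable_refl: "u \<in> carrier_vec m \<Longrightarrow> gate_reachable m u u"
  unfolding gate_reachable_def by (intro exI[of _ "[]"]) simp

lemma gate_reachable_step:
  assumes "gate_reachable m u v" "u \<in> carrier_vec m" "G \<in> gens m"
  shows "gate_reachable m u (G *\<^sub>v v)"
proof -
  obtain Gs where Gs: "set Gs \<subseteq> gens m" "foldr (*) Gs (1\<^sub>m m) *\<^sub>v u = v"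
    using assms(1) unfolding gate_reachable_def by blast
  have "foldr (*) (G # Gs) (1\<^sub>m m) *\<^sub>v u = G *\<^sub>v (foldr (*) Gs (1\<^sub>m m) *\<^sub>v u)"
    using gens_carrier_mat[OF assms(3)] foldr_gens_carrier_mat[OF Gs(1)] assms(2)
    by (simp add: assoc_mult_mat_vec)
  with Gs assms(3) show ?thesis
    unfolding gate_reachable_def by (intro exI[of _ "G # Gs"]) simp
qed

lemma mult_mat_vec_unit_vec:
  fixes A :: "'a::semiring_1 mat"
  assumes "A \<in> carrier_mat n m" "i < m"
  shows "A *\<^sub>v unit_vec m i = col A i"
  using assms by (intro eq_vecI) auto

lemma one_level_mult_unit_vec:
  assumes "i < m"
  shows "one_level m c i *\<^sub>v unit_vec m i = c \<cdot>\<^sub>v unit_vec m i"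
  using assms by (subst mult_mat_vec_unit_vec) (auto simp: one_level_def intro!: eq_vecI)

lemma two_level_Xgate_mult_unit_vec:
  assumes "p < q" "q < m"
  shows "two_level m Xgate p q *\<^sub>v unit_vec m p = unit_vec m q"
    and "two_level m Xgate p q *\<^sub>v unit_vec m q = unit_vec m p"
  using assms
  by (subst mult_mat_vec_unit_vec; auto simp: two_level_def Xgate_def intro!: eq_vecI)+

lemma gate_reachable_phase:
  assumes "i < m"
  shows "gate_reachable m (x \<cdot>\<^sub>v unit_vec m i) ((zeta12 ^ n * x) \<cdot>\<^sub>v unit_vec m i)"
proof (induction n)
  case 0
  show ?case
    by (simp add: gate_reachable_refl)
next
  case (Suc n)
  have G: "one_level m zeta12 i \<in> gens m"
    using assms unfolding gens_def by blast
  from gate_reachable_step[OF Suc _ G]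
  have "gate_reachable m (x \<cdot>\<^sub>v unit_vec m i)
      (one_level m zeta12 i *\<^sub>v ((zeta12 ^ n * x) \<cdot>\<^sub>v unit_vec m i))"
    by simp
  also have "one_level m zeta12 i *\<^sub>v ((zeta12 ^ n * x) \<cdot>\<^sub>v unit_vec m i)
      = (zeta12 ^ Suc n * x) \<cdot>\<^sub>v unit_vec m i"
    using assms gens_carrier_mat[OF G] by (simp add: mult_mat_vec one_level_mult_unit_vec smult_smult_assoc mult_ac)
  finally show ?case .
qed

lemma gate_reachable_root_of_unity_unit_vec:
  assumes "i < m" "j < m"
  shows "gate_reachable m (zeta12 ^ k \<cdot>\<^sub>v unit_vec m i) (unit_vec m j)"
proof -
  have "zeta12 ^ (11 * k) * zeta12 ^ k = (zeta12 ^ 12) ^ k"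
    by (simp flip: power_add power_mult)
  then have "zeta12 ^ (11 * k) * zeta12 ^ k = 1"
    by (simp add: zeta12_power_12)
  then have reach_i: "gate_reachable m (zeta12 ^ k \<cdot>\<^sub>v unit_vec m i) (unit_vec m i)"
    using gate_reachable_phase[OF \<open>i < m\<close>, of "zeta12 ^ k" "11 * k"] by simp
  show ?thesis
  proof (cases "i = j")
    case True
    with reach_i show ?thesis
      by simp
  next
    case False
    define p q where "p = min i j" and "q = max i j"
    have "p < q" "q < m"
      using False assms unfolding p_def q_def by auto
    then have "two_level m Xgate p q \<in> gens m"
      unfolding gens_def by blast
    moreover have "two_level m Xgate p q *\<^sub>v unit_vec m i = unit_vec m j"
      using two_level_Xgate_mult_unit_vec[OF \<open>p < q\<close> \<open>q < m\<close>] False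
      unfolding p_def q_def by (cases "i < j") (simp_all add: min_def max_def)
    ultimately show ?thesis
      using gate_reachable_step[OF reach_i] by fastforce
  qed
qed

theorem lemma7p2:
  fixes u :: "complex vec" and m j :: nat
  assumes "dim_vec u = m"
    and "\<forall>i < m. u $ i \<in> R12"
    and "unit_vector u"
    and "lde u = 0"
    and "j < m"
  shows "\<exists>Gs. set Gs \<subseteq> gens m \<and> foldr (*) Gs (1\<^sub>m m) *\<^sub>v u = unit_vec m j"
proof -
  have "\<forall>i < dim_vec u. u $ i \<in> Zzeta12"
    using assms(1,2,4) by (intro lde_eq_0_imp_Zzeta12) simp_all
  then obtain i k where "i < m" "u = zeta12 ^ k \<cdot>\<^sub>v unit_vec m i"
    using Zzeta12_unit_vector_eq_root_of_unity_unit_vec \<open>unit_vector u\<close> assms(1) by metis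
  then have "gate_reachable m u (unit_vec m j)"
    using gate_reachable_root_of_unity_unit_vec \<open>j < m\<close> by simp
  then show ?thesis
    unfolding gate_reachable_def .
qed

end
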